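(* Let $K$ be a field of characteristic zero and let $D$ be a simple digraph with vertex set $\{v_1,\dots,v_n\}$ and edge set $\{e_1,\dots,e_m\}$. Let $I(D,E)$ be the ideal of $K[e_1,\dots,e_m,v_1,\dots,v_n,z_1,\dots,z_n]$ generated by the binomials $e_h-z_iv_j$ for every edge $e_h=[v_i,v_j]$ of $D$, together with $z_iv_i-1$ for $i=1,\dots,n$, and let $I(E)_D=I(D,E)\cap K[e_1,\dots,e_m]$. Then $I(E)_D$ is generated by the binomials $f_C$, where $C$ ranges over the cycles of $D$.
   Context: $[v_i,v_j]$ denotes the directed edge from $v_i$ to $v_j$. A cycle of $D$ is a sequence of distinct vertices $v_{i(1)},\dots,v_{i(q)}$ ($q\ge 2$) together with distinct edges $e_{h_1},\dots,e_{h_q}$ of $D$ such that, setting $v_{i(q+1)}=v_{i(1)}$, each $e_{h_k}$ is either $[v_{i(k)},v_{i(k+1)}]$ or $[v_{i(k+1)},v_{i(k)}]$ (i.e. a cycle of the underlying undirected graph, edge directions ignored). It is a directed cycle if $e_{h_k}=[v_{i(k)},v_{i(k+1)}]$ for all $k$. For such a cycle, traversed in the given order, let $I$ be the set of indices $h_k$ with $e_{h_k}=[v_{i(k)},v_{i(k+1)}]$ (edges traversed along their direction) and $J$ the set of the remaining indices; then $f_C=\prod_{h\in I}e_h-\prod_{h\in J}e_h$ (an empty product equals $1$; so for a directed cycle $f_C=\prod_{h\in I}e_h-1$). Equivalently, $I(E)_D$ is the toric ideal, i.e. the kernel of the $K$-algebra map $K[e_1,\dots,e_m]\to K[v_1^{\pm1},\dots,v_n^{\pm1}]$,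 $e_h\mapsto v_jv_i^{-1}$ for $e_h=[v_i,v_j]$. *)

theory Defs
  imports "HOL-Library.Poly_Mapping"
begin

datatype var = Ev nat | Vv nat | Zv nat

type_synonym 'k mpoly = "(var \<Rightarrow>\<^sub>0 nat) \<Rightarrow>\<^sub>0 'k"

definition Var :: "var \<Rightarrow> 'k::comm_ring_1 mpoly" where
  "Var x = Poly_Mapping.single (Poly_Mapping.single x 1) 1"

definition poly_ring :: "var set \<Rightarrow> 'k::comm_ring_1 mpoly set" where
  "poly_ring X = {p. \<forall>mon \<in> Poly_Mapping.keys p. Poly_Mapping.keys mon \<subseteq> X}"

definition ideal_in :: "'a::comm_ring_1 set \<Rightarrow> 'a set \<Rightarrow> 'a set" where
  "ideal_in R S = {x. \<exists>F c. finite F \<and> F \<subseteq> S \<and> (\<forall>g\<in>F. c g \<in> R) \<and> x = (\<Sum>g\<in>F. c g * g)}"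

text \<open>A simple digraph on vertices 1..n with edges 1..m, edge h = (i,j) meaning e_h = [v_i,v_j].\<close>
definition simple_digraph :: "nat \<Rightarrow> nat \<Rightarrow> (nat \<Rightarrow> nat \<times> nat) \<Rightarrow> bool" where
  "simple_digraph n m edge \<longleftrightarrow>
     (\<forall>h\<in>{1..m}. fst (edge h) \<in> {1..n} \<and> snd (edge h) \<in> {1..n} \<and> fst (edge h) \<noteq> snd (edge h))
     \<and> inj_on edge {1..m}"

definition is_cycle :: "nat \<Rightarrow> nat \<Rightarrow> (nat \<Rightarrow> nat \<times> nat) \<Rightarrow> nat list \<Rightarrow> nat list \<Rightarrow> bool" where
  "is_cycle n m edge vs hs \<longleftrightarrow>
     length vs \<ge> 2 \<and> length hs = length vs \<and> distinct vs \<and> distinct hs \<and>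
     set vs \<subseteq> {1..n} \<and> set hs \<subseteq> {1..m} \<and>
     (\<forall>k<length vs. edge (hs!k) = (vs!k, vs!(Suc k mod length vs))
                   \<or> edge (hs!k) = (vs!(Suc k mod length vs), vs!k))"

definition fwd :: "(nat \<Rightarrow> nat \<times> nat) \<Rightarrow> nat list \<Rightarrow> nat list \<Rightarrow> nat \<Rightarrow> bool" where
  "fwd edge vs hs k \<longleftrightarrow> edge (hs!k) = (vs!k, vs!(Suc k mod length vs))"

definition f_C :: "(nat \<Rightarrow> nat \<times> nat) \<Rightarrow> nat list \<Rightarrow> nat list \<Rightarrow> 'k::comm_ring_1 mpoly" where
  "f_C edge vs hs =
     (\<Prod>k\<in>{k. k < length vs \<and> fwd edge vs hs k}. Var (Ev (hs!k)))
   - (\<Prod>k\<in>{k. k < length vs \<and> \<not> fwd edge vs hs k}. Var (Ev (hs!k)))"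

definition full_vars :: "nat \<Rightarrow> nat \<Rightarrow> var set" where
  "full_vars n m = Ev ` {1..m} \<union> Vv ` {1..n} \<union> Zv ` {1..n}"

definition I_DE :: "nat \<Rightarrow> nat \<Rightarrow> (nat \<Rightarrow> nat \<times> nat) \<Rightarrow> 'k::comm_ring_1 mpoly set" where
  "I_DE n m edge = ideal_in (poly_ring (full_vars n m))
     ({Var (Ev h) - Var (Zv (fst (edge h))) * Var (Vv (snd (edge h))) | h. h \<in> {1..m}}
      \<union> {Var (Zv i) * Var (Vv i) - 1 | i. i \<in> {1..n}})"

definition I_E_D :: "nat \<Rightarrow> nat \<Rightarrow> (nat \<Rightarrow> nat \<times> nat) \<Rightarrow> 'k::comm_ring_1 mpoly set" where
  "I_E_D n m edge = I_DE n m edge \<inter> poly_ring (Ev ` {1..m})"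

end

theory Submission
  imports Defs "HOL-Library.Indicator_Function"
begin

text \<open>
  Call a pair \<open>(\<alpha>, \<beta>)\<close> of exponent vectors on the edges balanced if \<open>\<alpha>\<close> and \<open>\<beta>\<close> have the
  same in-degree minus out-degree at every vertex. Cycle binomials are the binomials
  \<open>e\<^sup>\<alpha> - e\<^sup>\<beta>\<close> of special balanced pairs, and both inclusions go through balanced binomials.

  Modulo \<open>I(D,E)\<close> we have \<open>e\<^sub>h \<equiv> z\<^sub>i v\<^sub>j\<close>, which turns \<open>e\<^sup>\<alpha>\<close> into \<open>z\<^sup>a v\<^sup>b\<close> with \<open>a\<close>, \<open>b\<close> the out- and
  in-degree vectors of \<open>\<alpha>\<close>, and \<open>z\<^sub>i v\<^sub>i \<equiv> 1\<close>, which allows raising the exponents of \<open>z\<^sub>i\<close> and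
  \<open>v\<^sub>i\<close> together. Hence \<open>e\<^sup>\<alpha> - e\<^sup>\<beta> \<in> I(D,E)\<close> for every balanced pair.

  Conversely, grade \<open>K[e,v,z]\<close> by \<open>\<int>\<^sup>n\<close> with \<open>deg e\<^sub>h = t\<^sub>j - t\<^sub>i\<close>, \<open>deg v\<^sub>i = t\<^sub>i\<close>, \<open>deg z\<^sub>i = -t\<^sub>i\<close>.
  All generators of \<open>I(D,E)\<close> are homogeneous of degree \<open>0\<close>, so in every \<open>f \<in> I(E)\<^sub>D\<close> the
  coefficients of the monomials of any fixed degree sum to \<open>0\<close>. Thus \<open>f\<close> is a combination of
  binomials \<open>e\<^sup>\<alpha> - e\<^sup>\<beta>\<close> of equal degree, i.e. with \<open>(\<alpha>, \<beta>)\<close> balanced. Such a binomial lies in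
  the ideal generated by the cycle binomials, by induction on \<open>|\<alpha>| + |\<beta>|\<close>: an edge in both
  supports factors out; otherwise the support of \<open>\<alpha>\<close> oriented along \<open>D\<close> together with the
  support of \<open>\<beta>\<close> oriented against \<open>D\<close> has equal in- and out-degrees at every vertex, so a walk
  in it never gets stuck and closes up to a cycle \<open>C\<close> of \<open>D\<close> whose forward edges divide \<open>e\<^sup>\<alpha>\<close>
  and whose backward edges divide \<open>e\<^sup>\<beta>\<close>. Removing them gives a smaller balanced pair
  \<open>(\<alpha>', \<beta>')\<close> with \<open>e\<^sup>\<alpha> - e\<^sup>\<beta> \<in> (f\<^sub>C, e\<^sup>\<alpha>\<^sup>' - e\<^sup>\<beta>\<^sup>')\<close>.
\<close>

definition is_subring :: "'a::comm_ring_1 set \<Rightarrow> bool" where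
  "is_subring R \<longleftrightarrow> 1 \<in> R \<and> (\<forall>x\<in>R. \<forall>y\<in>R. x + y \<in> R \<and> x * y \<in> R \<and> - x \<in> R)"

lemma
  assumes "is_subring R"
  shows subring_one: "1 \<in> R"
    and subring_add: "x \<in> R \<Longrightarrow> y \<in> R \<Longrightarrow> x + y \<in> R"
    and subring_mult: "x \<in> R \<Longrightarrow> y \<in> R \<Longrightarrow> x * y \<in> R"
    and subring_uminus: "x \<in> R \<Longrightarrow> - x \<in> R"
  using assms by (auto simp: is_subring_def)

lemma subring_zero: "is_subring R \<Longrightarrow> 0 \<in> R"
  using subring_add[of R 1 "- 1"] subring_one subring_uminus by fastforce

lemma subring_diff: "is_subring R \<Longrightarrow> x \<in> R \<Longrightarrow> y \<in> R \<Longrightarrow> x - y \<in> R"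
  using subring_add[of R x "- y"] subring_uminus[of R y] by simp

lemma subring_power: "is_subring R \<Longrightarrow> x \<in> R \<Longrightarrow> x ^ k \<in> R"
  by (induction k) (auto intro: subring_one subring_mult)

lemma subring_prod: "is_subring R \<Longrightarrow> (\<And>i. i \<in> A \<Longrightarrow> f i \<in> R) \<Longrightarrow> prod f A \<in> R"
  by (induction A rule: infinite_finite_induct) (auto intro: subring_one subring_mult)

lemma subring_sum: "is_subring R \<Longrightarrow> (\<And>i. i \<in> A \<Longrightarrow> f i \<in> R) \<Longrightarrow> sum f A \<in> R"
  by (induction A rule: infinite_finite_induct) (auto intro: subring_zero subring_add)

lemma ideal_in_zero: "0 \<in> ideal_in R S"
  unfolding ideal_in_def by (intro CollectI exI[of _ "{}"]) auto

lemma ideal_in_generator: "is_subring R \<Longrightarrow> g \<in> S \<Longrightarrow> g \<in> ideal_in R S"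
  unfolding ideal_in_def
  by (intro CollectI exI[of _ "{g}"] exI[of _ "\<lambda>_. 1"]) (auto intro: subring_one)

lemma ideal_in_add:
  assumes R: "is_subring R" and "x \<in> ideal_in R S" "y \<in> ideal_in R S"
  shows "x + y \<in> ideal_in R S"
proof -
  obtain F c where F: "finite F" "F \<subseteq> S" "\<forall>g\<in>F. c g \<in> R" "x = (\<Sum>g\<in>F. c g * g)"
    using assms(2) unfolding ideal_in_def by blast
  obtain G d where G: "finite G" "G \<subseteq> S" "\<forall>g\<in>G. d g \<in> R" "y = (\<Sum>g\<in>G. d g * g)"
    using assms(3) unfolding ideal_in_def by blast
  define e where "e g = (if g \<in> F then c g else 0) + (if g \<in> G then d g else 0)" for g
  have "x + y = (\<Sum>g\<in>F \<union> G. (if g \<in> F then c g * g else 0) + (if g \<in> G then d g * g else 0))"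
    using F G by (simp add: sum.distrib sum.inter_restrict[symmetric] Int_absorb1)
  also have "\<dots> = (\<Sum>g\<in>F \<union> G. e g * g)"
    by (rule sum.cong) (simp_all add: e_def distrib_right)
  finally have "x + y = (\<Sum>g\<in>F \<union> G. e g * g)" .
  moreover have "\<forall>g\<in>F \<union> G. e g \<in> R"
    using F G R unfolding e_def by (auto intro!: subring_add subring_zero)
  ultimately show ?thesis
    unfolding ideal_in_def using F G by (intro CollectI exI[of _ "F \<union> G"] exI[of _ e]) auto
qed

lemma ideal_in_mult:
  assumes R: "is_subring R" and "r \<in> R" "x \<in> ideal_in R S"
  shows "r * x \<in> ideal_in R S"
proof -
  obtain F c where F: "finite F" "F \<subseteq> S" "\<forall>g\<in>F. c g \<in> R" "x = (\<Sum>g\<in>F. c g * g)"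
    using assms(3) unfolding ideal_in_def by blast
  have "r * x = (\<Sum>g\<in>F. (r * c g) * g)"
    using F(4) by (simp add: sum_distrib_left mult.assoc)
  then show ?thesis
    unfolding ideal_in_def using F R \<open>r \<in> R\<close>
    by (intro CollectI exI[of _ F] exI[of _ "\<lambda>g. r * c g"]) (auto intro: subring_mult)
qed

lemma ideal_in_diff:
  assumes R: "is_subring R" and "x \<in> ideal_in R S" "y \<in> ideal_in R S"
  shows "x - y \<in> ideal_in R S"
  using ideal_in_add[OF R assms(2) ideal_in_mult[OF R subring_uminus[OF R subring_one[OF R]] assms(3)]]
  by simp

lemma ideal_in_sum:
  "is_subring R \<Longrightarrow> (\<And>i. i \<in> A \<Longrightarrow> f i \<in> ideal_in R S) \<Longrightarrow> sum f A \<in> ideal_in R S"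
  by (induction A rule: infinite_finite_induct) (auto intro: ideal_in_zero ideal_in_add)

lemma ideal_in_subset:
  assumes R: "is_subring R" and "S \<subseteq> R"
  shows "ideal_in R S \<subseteq> R"
  using assms unfolding ideal_in_def
  by (auto intro!: subring_sum[OF R] subring_mult[OF R])

lemma ideal_in_minimal:
  assumes R': "is_subring R'" and "R \<subseteq> R'" and "S \<subseteq> ideal_in R' S'"
  shows "ideal_in R S \<subseteq> ideal_in R' S'"
  using assms unfolding ideal_in_def[of R S]
  by (auto intro!: ideal_in_sum[OF R'] ideal_in_mult[OF R'])

lemma ideal_in_diff_trans:
  "is_subring R \<Longrightarrow> x - y \<in> ideal_in R S \<Longrightarrow> y - z \<in> ideal_in R S \<Longrightarrow> x - z \<in> ideal_in R S"
  using ideal_in_add[of R "x - y" S "y - z"] by simp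

lemma ideal_in_diff_sym:
  "is_subring R \<Longrightarrow> x - y \<in> ideal_in R S \<Longrightarrow> y - x \<in> ideal_in R S"
  using ideal_in_diff[of R 0 S "x - y"] by (simp add: ideal_in_zero)

lemma ideal_in_diff_mult:
  assumes R: "is_subring R" and "x \<in> R" "y' \<in> R"
    and "x - y \<in> ideal_in R S" "x' - y' \<in> ideal_in R S"
  shows "x * x' - y * y' \<in> ideal_in R S"
proof -
  have "x * x' - y * y' = x * (x' - y') + y' * (x - y)"
    by (simp add: algebra_simps)
  then show ?thesis
    using assms by (auto intro!: ideal_in_add ideal_in_mult)
qed

lemma ideal_in_diff_prod:
  assumes R: "is_subring R"
    and "\<And>i. i \<in> A \<Longrightarrow> u i \<in> R \<and> w i \<in> R \<and> u i - w i \<in> ideal_in R S"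
  shows "prod u A - prod w A \<in> ideal_in R S"
  using assms(2)
proof (induction A rule: infinite_finite_induct)
  case (insert a A)
  then show ?case
    by (simp add: ideal_in_diff_mult[OF R] subring_prod[OF R])
qed (auto simp: ideal_in_zero)

lemma ideal_in_diff_power:
  assumes R: "is_subring R" and "x \<in> R" "y \<in> R" "x - y \<in> ideal_in R S"
  shows "x ^ k - y ^ k \<in> ideal_in R S"
  using ideal_in_diff_prod[OF R, of "{..<k}" "\<lambda>_. x" "\<lambda>_. y" S] assms by simp

lemma poly_ring_is_subring: "is_subring (poly_ring X)"
proof -
  have mult: "p * q \<in> poly_ring X" if p: "p \<in> poly_ring X" and q: "q \<in> poly_ring X"
    for p q :: "'k::comm_ring_1 mpoly"
  proof -
    have "Poly_Mapping.keys (a + b) \<subseteq> X"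
      if "a \<in> Poly_Mapping.keys p" "b \<in> Poly_Mapping.keys q" for a b
      using p q that keys_add[of a b] unfolding poly_ring_def by blast
    then show ?thesis
      using keys_mult[of p q] unfolding poly_ring_def by blast
  qed
  have add: "p + q \<in> poly_ring X" if "p \<in> poly_ring X" "q \<in> poly_ring X"
    for p q :: "'k::comm_ring_1 mpoly"
    using that keys_add[of p q] unfolding poly_ring_def by blast
  have "(1 :: 'k::comm_ring_1 mpoly) \<in> poly_ring X"
    by (simp add: poly_ring_def)
  moreover have "- p \<in> poly_ring X" if "p \<in> poly_ring X" for p :: "'k::comm_ring_1 mpoly"
    using that by (simp add: poly_ring_def)
  ultimately show ?thesis
    unfolding is_subring_def using add mult by blast
qed

lemma Var_in_poly_ring: "x \<in> X \<Longrightarrow> Var x \<in> poly_ring X"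
  by (auto simp: poly_ring_def Var_def)

lemma poly_ring_mono: "X \<subseteq> Y \<Longrightarrow> poly_ring X \<subseteq> poly_ring Y"
  by (auto simp: poly_ring_def)

lemma constant_in_poly_ring: "Poly_Mapping.single 0 c \<in> poly_ring X"
  by (auto simp: poly_ring_def)

lemma sum_single_lookup:
  "(\<Sum>a\<in>Poly_Mapping.keys p. Poly_Mapping.single a (Poly_Mapping.lookup p a)) = p"
  by (rule poly_mapping_eqI) (simp add: lookup_sum lookup_single when_def in_keys_iff sum.delta)

lemma single_sum_one:
  "Poly_Mapping.single (\<Sum>x\<in>A. a x) (1::'k::comm_ring_1) = (\<Prod>x\<in>A. Poly_Mapping.single (a x) 1)"
proof (induction A rule: infinite_finite_induct)
  case (insert x A)
  then show ?case
    using mult_single[of "a x" "1::'k" "sum a A" 1] by simp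
qed simp_all

lemma monomial_single_eq_Var_power:
  "Poly_Mapping.single (Poly_Mapping.single x k) (1::'k::comm_ring_1) = Var x ^ k"
proof -
  have "Poly_Mapping.single x k = (\<Sum>_<k. Poly_Mapping.single x 1)"
  proof (induction k)
    case (Suc k)
    then show ?case
      using single_add[of x k 1] by simp
  qed simp
  then have "Poly_Mapping.single (Poly_Mapping.single x k) (1::'k)
      = (\<Prod>_<k. Poly_Mapping.single (Poly_Mapping.single x 1) 1)"
    by (simp only: single_sum_one)
  then show ?thesis
    by (simp add: Var_def)
qed

lemma monomial_eq_prod_Var_power:
  "Poly_Mapping.single mon (1::'k::comm_ring_1)
     = (\<Prod>x\<in>Poly_Mapping.keys mon. Var x ^ Poly_Mapping.lookup mon x)"
proof -
  have "Poly_Mapping.single mon (1::'k) = Poly_Mapping.single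
      (\<Sum>x\<in>Poly_Mapping.keys mon. Poly_Mapping.single x (Poly_Mapping.lookup mon x)) 1"
    by (simp add: sum_single_lookup)
  then show ?thesis
    by (simp add: single_sum_one monomial_single_eq_Var_power)
qed

lemma single_sum_coeff:
  "Poly_Mapping.single k (sum f A) = (\<Sum>x\<in>A. Poly_Mapping.single k (f x))"
  by (induction A rule: infinite_finite_induct) (simp_all add: single_add)

lemma prod_power_group:
  fixes x :: "'b \<Rightarrow> 'c::comm_monoid_mult"
  assumes "finite A" "finite B" "g ` A \<subseteq> B"
  shows "(\<Prod>h\<in>A. x (g h) ^ c h) = (\<Prod>v\<in>B. x v ^ (\<Sum>h\<in>{h\<in>A. g h = v}. c h))"
proof -
  have "(\<Prod>v\<in>B. x v ^ (\<Sum>h\<in>{h\<in>A. g h = v}. c h)) = (\<Prod>v\<in>B. \<Prod>h\<in>{h\<in>A. g h = v}. x (g h) ^ c h)"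
    by (rule prod.cong) (auto simp: power_sum)
  also have "\<dots> = (\<Prod>h\<in>A. x (g h) ^ c h)"
    by (rule prod.group) (use assms in auto)
  finally show ?thesis
    by simp
qed

definition push_keys :: "('a \<Rightarrow> 'b) \<Rightarrow> ('a \<Rightarrow>\<^sub>0 'c::comm_monoid_add) \<Rightarrow> ('b \<Rightarrow>\<^sub>0 'c)" where
  "push_keys \<sigma> p = (\<Sum>a\<in>Poly_Mapping.keys p. Poly_Mapping.single (\<sigma> a) (Poly_Mapping.lookup p a))"

lemma push_keys_add: "push_keys \<sigma> (p + q) = push_keys \<sigma> p + push_keys \<sigma> q"
  unfolding push_keys_def by (rule setsum_keys_plus_distrib) (auto simp: single_add)

lemma push_keys_zero [simp]: "push_keys \<sigma> 0 = 0"
  by (simp add: push_keys_def)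

lemma push_keys_single [simp]: "push_keys \<sigma> (Poly_Mapping.single a c) = Poly_Mapping.single (\<sigma> a) c"
  by (cases "c = 0") (auto simp: push_keys_def)

lemma push_keys_sum: "push_keys \<sigma> (sum f A) = (\<Sum>i\<in>A. push_keys \<sigma> (f i))"
  by (induction A rule: infinite_finite_induct) (auto simp: push_keys_add)

lemma push_keys_diff:
  "push_keys \<sigma> (p - q) = push_keys \<sigma> p - push_keys \<sigma> (q :: 'a \<Rightarrow>\<^sub>0 'c::ab_group_add)"
  using push_keys_add[of \<sigma> "p - q" q] by (simp add: eq_diff_eq)

lemma push_keys_one:
  "\<sigma> 0 = 0 \<Longrightarrow> push_keys \<sigma> (1 :: 'a::zero \<Rightarrow>\<^sub>0 'c::{comm_monoid_add,zero_neq_one}) = 1"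
  by (simp add: push_keys_def)

lemma push_keys_mult:
  fixes \<sigma> :: "'a::comm_monoid_add \<Rightarrow> 'b::comm_monoid_add"
  assumes additive: "\<And>a b. \<sigma> (a + b) = \<sigma> a + \<sigma> b"
  shows "push_keys \<sigma> (p * q) = push_keys \<sigma> p * push_keys \<sigma> (q :: 'a \<Rightarrow>\<^sub>0 'c::comm_ring_1)"
proof -
  let ?P = "Poly_Mapping.keys p" and ?Q = "Poly_Mapping.keys q"
  have "p * q = (\<Sum>a\<in>?P. Poly_Mapping.single a (Poly_Mapping.lookup p a))
              * (\<Sum>b\<in>?Q. Poly_Mapping.single b (Poly_Mapping.lookup q b))"
    by (simp add: sum_single_lookup)
  also have "\<dots> = (\<Sum>a\<in>?P. \<Sum>b\<in>?Q.
      Poly_Mapping.single (a + b) (Poly_Mapping.lookup p a * Poly_Mapping.lookup q b))"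
    by (simp add: sum_product mult_single)
  finally show ?thesis
    unfolding push_keys_def[of \<sigma> p] push_keys_def[of \<sigma> q]
    by (simp add: push_keys_sum additive sum_product mult_single)
qed

lemma lookup_push_keys:
  "Poly_Mapping.lookup (push_keys \<sigma> p) b
     = (\<Sum>a\<in>{a\<in>Poly_Mapping.keys p. \<sigma> a = b}. Poly_Mapping.lookup p a)"
  unfolding push_keys_def by (simp add: lookup_sum lookup_single when_def sum.inter_filter)

text \<open>The subtracted terms cancel out: on each \<open>\<sigma>\<close>-fibre their coefficients add up to the
  corresponding coefficient of \<open>push_keys \<sigma> p\<close>.\<close>

lemma push_keys_eq_0_binomial_decomposition:
  fixes p :: "'a \<Rightarrow>\<^sub>0 'c::ab_group_add"
  assumes "push_keys \<sigma> p = 0"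
  obtains r where "\<And>a. a \<in> Poly_Mapping.keys p \<Longrightarrow> r a \<in> Poly_Mapping.keys p \<and> \<sigma> (r a) = \<sigma> a"
    and "p = (\<Sum>a\<in>Poly_Mapping.keys p.
               Poly_Mapping.single a (Poly_Mapping.lookup p a)
             - Poly_Mapping.single (r a) (Poly_Mapping.lookup p a))"
proof
  let ?K = "Poly_Mapping.keys p" and ?c = "Poly_Mapping.lookup p"
  define rep where "rep b = (SOME a. a \<in> ?K \<and> \<sigma> a = b)" for b
  show "rep (\<sigma> a) \<in> ?K \<and> \<sigma> (rep (\<sigma> a)) = \<sigma> a" if "a \<in> ?K" for a
    unfolding rep_def by (rule someI[of "\<lambda>x. x \<in> ?K \<and> \<sigma> x = \<sigma> a"]) (use that in auto)
  have "(\<Sum>a\<in>?K. Poly_Mapping.single (rep (\<sigma> a)) (?c a))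
      = (\<Sum>b\<in>\<sigma> ` ?K. \<Sum>a\<in>{a\<in>?K. \<sigma> a = b}. Poly_Mapping.single (rep b) (?c a))"
    by (subst sum.image_gen[of _ _ \<sigma>]) auto
  also have "\<dots> = (\<Sum>b\<in>\<sigma> ` ?K. Poly_Mapping.single (rep b) (Poly_Mapping.lookup (push_keys \<sigma> p) b))"
    by (simp add: lookup_push_keys single_sum_coeff)
  also have "\<dots> = 0"
    by (simp add: assms)
  finally show "p = (\<Sum>a\<in>?K. Poly_Mapping.single a (?c a) - Poly_Mapping.single (rep (\<sigma> a)) (?c a))"
    by (simp only: sum_subtractf sum_single_lookup diff_zero)
qed

section \<open>Cycles in finite relations\<close>

lemma walk_revisits:
  fixes u :: "nat \<Rightarrow> 'v"
  assumes "finite V" "range u \<subseteq> V"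
  obtains i j where "i < j" "u i = u j" "inj_on u {i..<j}"
proof -
  have "\<not> inj_on u {..card V}"
  proof
    assume "inj_on u {..card V}"
    then have "card (u ` {..card V}) = Suc (card V)"
      by (simp add: card_image)
    moreover have "card (u ` {..card V}) \<le> card V"
      using assms by (intro card_mono) auto
    ultimately show False
      by simp
  qed
  then obtain a b where "a \<noteq> b" "u a = u b"
    unfolding inj_on_def by blast
  then have "\<exists>j. \<exists>i<j. u i = u j"
    by (metis linorder_neqE_nat)
  define J where "J = (LEAST j. \<exists>i<j. u i = u j)"
  obtain i where "i < J" "u i = u J"
    using LeastI_ex[OF \<open>\<exists>j. \<exists>i<j. u i = u j\<close>] unfolding J_def by blast
  moreover have "inj_on u {i..<J}"
  proof (rule linorder_inj_onI)
    fix a b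
    assume "a < b" "a \<in> {i..<J}" "b \<in> {i..<J}"
    then have "\<not> (\<exists>i<b. u i = u b)"
      unfolding J_def by (intro not_less_Least) simp
    then show "u a \<noteq> u b"
      using \<open>a < b\<close> by blast
  qed auto
  ultimately show ?thesis
    using that by blast
qed

lemma distinct_cycle_labels:
  assumes "distinct vs" "length hs = length vs"
    and arcs: "\<And>k. k < length vs \<Longrightarrow> arc (vs!k) (vs!(Suc k mod length vs)) (hs!k)"
    and tail_unique: "\<And>x x' y y' h. arc x y h \<Longrightarrow> arc x' y' h \<Longrightarrow> x = x'"
  shows "distinct hs"
  unfolding distinct_conv_nth
proof (intro allI impI)
  fix a b
  assume ab: "a < length hs" "b < length hs" "a \<noteq> b"
  have "arc (vs!a) (vs!(Suc a mod length vs)) (hs!a)" "arc (vs!b) (vs!(Suc b mod length vs)) (hs!b)"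
    using arcs ab assms(2) by simp_all
  moreover have "vs!a \<noteq> vs!b"
    using assms(1,2) ab by (simp add: nth_eq_iff_index_eq)
  ultimately show "hs!a \<noteq> hs!b"
    using tail_unique by metis
qed

lemma walk_segment_cycle:
  fixes arc :: "'v \<Rightarrow> 'v \<Rightarrow> 'e \<Rightarrow> bool"
  assumes walk: "\<And>k. arc (u k) (u (Suc k)) (e k)"
    and no_loop: "\<And>x y h. arc x y h \<Longrightarrow> x \<noteq> y"
    and tail_unique: "\<And>x x' y y' h. arc x y h \<Longrightarrow> arc x' y' h \<Longrightarrow> x = x'"
    and seg: "i < j" "u i = u j" "inj_on u {i..<j}"
  obtains vs hs where "2 \<le> length vs" "length hs = length vs" "distinct vs" "distinct hs"
    "set vs \<subseteq> range u" "\<And>k. k < length vs \<Longrightarrow> arc (vs!k) (vs!(Suc k mod length vs)) (hs!k)"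
proof -
  define vs where "vs = map u [i..<j]"
  define hs where "hs = map e [i..<j]"
  have arcs: "arc (vs!k) (vs!(Suc k mod length vs)) (hs!k)" if "k < length vs" for k
  proof -
    have "vs!(Suc k mod length vs) = u (i + Suc k)"
    proof (cases "Suc k < length vs")
      case True
      then show ?thesis
        by (simp add: vs_def)
    next
      case False
      then have "Suc k = j - i"
        using that by (simp add: vs_def)
      then show ?thesis
        using seg(1,2) by (simp add: vs_def)
    qed
    then show ?thesis
      using that walk[of "i + k"] by (simp add: vs_def hs_def)
  qed
  have "length vs \<noteq> 1"
  proof
    assume "length vs = 1"
    then show False
      using no_loop[OF arcs[of 0]] by simp
  qed
  then have "2 \<le> length vs"
    using seg(1) by (simp add: vs_def)
  moreover have distinct: "distinct vs"
    using seg(3) by (simp add: vs_def distinct_map)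
  moreover have len: "length hs = length vs"
    by (simp add: vs_def hs_def)
  ultimately show ?thesis
    using distinct_cycle_labels[where arc = arc, OF distinct len arcs tail_unique] arcs by (intro that) (auto simp: vs_def)
qed

lemma obtain_infinite_walk:
  fixes arc :: "'v \<Rightarrow> 'v \<Rightarrow> 'e \<Rightarrow> bool"
  assumes continues: "\<And>x y h. arc x y h \<Longrightarrow> \<exists>z h'. arc y z h'"
    and start: "arc x\<^sub>0 y\<^sub>0 h\<^sub>0"
  obtains u e where "u 0 = y\<^sub>0" "\<And>k. arc (u k) (u (Suc k)) (e k)"
proof
  define step where "step y = (SOME p. arc y (fst p) (snd p))" for y
  define u where "u k = ((fst \<circ> step) ^^ k) y\<^sub>0" for k
  have step: "arc y (fst (step y)) (snd (step y))" if xy: "arc x y h" for x y h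
  proof -
    obtain z h' where "arc y z h'"
      using continues[OF xy] by blast
    then have "arc y (fst (z, h')) (snd (z, h'))"
      by simp
    then show ?thesis
      unfolding step_def by (rule someI)
  qed
  have entered: "\<exists>x h. arc x (u k) h" for k
  proof (induction k)
    case 0
    then show ?case
      using start by (auto simp: u_def)
  next
    case (Suc k)
    then obtain x h where "arc x (u k) h"
      by blast
    from step[OF this] show ?case
      by (auto simp: u_def)
  qed
  show "u 0 = y\<^sub>0"
    by (simp add: u_def)
  show "arc (u k) (u (Suc k)) (snd (step (u k)))" for k
  proof -
    obtain x h where "arc x (u k) h"
      using entered by blast
    from step[OF this] show ?thesis
      by (simp add: u_def)
  qed
qed

lemma arc_relation_has_cycle:
  fixes arc :: "'v \<Rightarrow> 'v \<Rightarrow> 'e \<Rightarrow> bool"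
  assumes "finite V" and into_V: "\<And>x y h. arc x y h \<Longrightarrow> y \<in> V"
    and no_loop: "\<And>x y h. arc x y h \<Longrightarrow> x \<noteq> y"
    and tail_unique: "\<And>x x' y y' h. arc x y h \<Longrightarrow> arc x' y' h \<Longrightarrow> x = x'"
    and continues: "\<And>x y h. arc x y h \<Longrightarrow> \<exists>z h'. arc y z h'"
    and start: "arc x\<^sub>0 y\<^sub>0 h\<^sub>0"
  obtains vs hs where "2 \<le> length vs" "length hs = length vs" "distinct vs" "distinct hs"
    "set vs \<subseteq> V" "\<And>k. k < length vs \<Longrightarrow> arc (vs!k) (vs!(Suc k mod length vs)) (hs!k)"
proof -
  obtain u e where u0: "u 0 = y\<^sub>0" and walk: "\<And>k. arc (u k) (u (Suc k)) (e k)"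
  proof (rule obtain_infinite_walk[where arc = arc])
    show "\<exists>z h'. arc y z h'" if "arc x y h" for x y h
      using continues[OF that] .
  qed (use start in blast)+
  have "u k \<in> V" for k
  proof (cases k)
    case 0
    then show ?thesis
      using into_V[OF start] u0 by simp
  next
    case (Suc k')
    then show ?thesis
      using into_V[OF walk[of k']] by simp
  qed
  then have "range u \<subseteq> V"
    by blast
  then obtain i j where seg: "i < j" "u i = u j" "inj_on u {i..<j}"
    using walk_revisits[OF \<open>finite V\<close>] by blast
  obtain vs hs where "2 \<le> length vs" "length hs = length vs" "distinct vs" "distinct hs"
    "set vs \<subseteq> range u" "\<And>k. k < length vs \<Longrightarrow> arc (vs!k) (vs!(Suc k mod length vs)) (hs!k)"
  proof (rule walk_segment_cycle[where arc = arc and u = u and e = e])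
    show "arc (u k) (u (Suc k)) (e k)" for k
      by (rule walk)
  qed (use no_loop tail_unique seg in blast)+
  with \<open>range u \<subseteq> V\<close> show ?thesis
    by (intro that) auto
qed

definition edge_monomial :: "nat \<Rightarrow> (nat \<Rightarrow> nat) \<Rightarrow> 'k::comm_ring_1 mpoly" where
  "edge_monomial m \<alpha> = (\<Prod>h\<in>{1..m}. Var (Ev h) ^ \<alpha> h)"

definition vertex_monomial :: "nat \<Rightarrow> (nat \<Rightarrow> nat) \<Rightarrow> (nat \<Rightarrow> nat) \<Rightarrow> 'k::comm_ring_1 mpoly" where
  "vertex_monomial n a b = (\<Prod>i\<in>{1..n}. Var (Zv i) ^ a i * Var (Vv i) ^ b i)"

definition indeg :: "(nat \<Rightarrow> nat \<times> nat) \<Rightarrow> nat \<Rightarrow> (nat \<Rightarrow> nat) \<Rightarrow> nat \<Rightarrow> nat" where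
  "indeg edge m \<alpha> v = (\<Sum>h\<in>{h\<in>{1..m}. snd (edge h) = v}. \<alpha> h)"

definition outdeg :: "(nat \<Rightarrow> nat \<times> nat) \<Rightarrow> nat \<Rightarrow> (nat \<Rightarrow> nat) \<Rightarrow> nat \<Rightarrow> nat" where
  "outdeg edge m \<alpha> v = (\<Sum>h\<in>{h\<in>{1..m}. fst (edge h) = v}. \<alpha> h)"

definition balanced :: "(nat \<Rightarrow> nat \<times> nat) \<Rightarrow> nat \<Rightarrow> (nat \<Rightarrow> nat) \<Rightarrow> (nat \<Rightarrow> nat) \<Rightarrow> bool" where
  "balanced edge m \<alpha> \<beta> \<longleftrightarrow>
     (\<forall>v. indeg edge m \<alpha> v + outdeg edge m \<beta> v = indeg edge m \<beta> v + outdeg edge m \<alpha> v)"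

lemma edge_monomial_cong: "(\<And>h. h \<in> {1..m} \<Longrightarrow> \<alpha> h = \<beta> h) \<Longrightarrow> edge_monomial m \<alpha> = edge_monomial m \<beta>"
  unfolding edge_monomial_def by (rule prod.cong) auto

lemma edge_monomial_add: "edge_monomial m (\<lambda>h. \<alpha> h + \<beta> h) = edge_monomial m \<alpha> * edge_monomial m \<beta>"
  unfolding edge_monomial_def by (simp add: power_add prod.distrib)

lemma edge_monomial_in_poly_ring: "edge_monomial m \<alpha> \<in> poly_ring (Ev ` {1..m})"
  unfolding edge_monomial_def
  by (intro subring_prod[OF poly_ring_is_subring] subring_power[OF poly_ring_is_subring]
      Var_in_poly_ring) auto

lemma indeg_add: "indeg edge m (\<lambda>h. \<alpha> h + \<beta> h) v = indeg edge m \<alpha> v + indeg edge m \<beta> v"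
  unfolding indeg_def by (simp add: sum.distrib)

lemma outdeg_add: "outdeg edge m (\<lambda>h. \<alpha> h + \<beta> h) v = outdeg edge m \<alpha> v + outdeg edge m \<beta> v"
  unfolding outdeg_def by (simp add: sum.distrib)

lemma balanced_refl: "balanced edge m \<gamma> \<gamma>"
  by (simp add: balanced_def)

lemma balanced_cancel:
  assumes "balanced edge m (\<lambda>h. \<alpha> h + \<gamma> h) (\<lambda>h. \<beta> h + \<delta> h)" and "balanced edge m \<gamma> \<delta>"
  shows "balanced edge m \<alpha> \<beta>"
  unfolding balanced_def
proof
  fix v
  have "indeg edge m \<alpha> v + indeg edge m \<gamma> v + (outdeg edge m \<beta> v + outdeg edge m \<delta> v)
      = indeg edge m \<beta> v + indeg edge m \<delta> v + (outdeg edge m \<alpha> v + outdeg edge m \<gamma> v)"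
    using assms(1) unfolding balanced_def indeg_add outdeg_add by blast
  moreover have "indeg edge m \<gamma> v + outdeg edge m \<delta> v = indeg edge m \<delta> v + outdeg edge m \<gamma> v"
    using assms(2) unfolding balanced_def by blast
  ultimately show "indeg edge m \<alpha> v + outdeg edge m \<beta> v = indeg edge m \<beta> v + outdeg edge m \<alpha> v"
    by linarith
qed

section \<open>Balanced binomials lie in \<open>I(D,E)\<close>\<close>

lemma I_DE_diff_trans:
  "x - y \<in> I_DE n m edge \<Longrightarrow> y - z \<in> I_DE n m edge \<Longrightarrow> x - z \<in> I_DE n m edge"
  unfolding I_DE_def by (rule ideal_in_diff_trans[OF poly_ring_is_subring])

lemma I_DE_diff_sym: "x - y \<in> I_DE n m edge \<Longrightarrow> y - x \<in> I_DE n m edge"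
  unfolding I_DE_def by (rule ideal_in_diff_sym[OF poly_ring_is_subring])

context
  fixes n m :: nat and edge :: "nat \<Rightarrow> nat \<times> nat"
  assumes simple: "simple_digraph n m edge"
begin

lemma edge_ends:
  assumes "h \<in> {1..m}"
  shows "fst (edge h) \<in> {1..n}" "snd (edge h) \<in> {1..n}" "fst (edge h) \<noteq> snd (edge h)"
  using simple assms unfolding simple_digraph_def by auto

lemma Var_in_full_ring:
  "h \<in> {1..m} \<Longrightarrow> Var (Ev h) \<in> poly_ring (full_vars n m)"
  "i \<in> {1..n} \<Longrightarrow> Var (Vv i) \<in> poly_ring (full_vars n m)"
  "i \<in> {1..n} \<Longrightarrow> Var (Zv i) \<in> poly_ring (full_vars n m)"
  by (auto intro: Var_in_poly_ring simp: full_vars_def)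

lemma vertex_monomial_in_full_ring: "vertex_monomial n a b \<in> poly_ring (full_vars n m)"
  unfolding vertex_monomial_def
  by (intro subring_prod[OF poly_ring_is_subring] subring_mult[OF poly_ring_is_subring]
      subring_power[OF poly_ring_is_subring] Var_in_full_ring)

lemma edge_monomial_mod_I_DE:
  "(edge_monomial m \<gamma> :: 'k::comm_ring_1 mpoly)
     - vertex_monomial n (outdeg edge m \<gamma>) (indeg edge m \<gamma>) \<in> I_DE n m edge"
proof -
  let ?R = "poly_ring (full_vars n m) :: 'k mpoly set"
  let ?Z = "\<lambda>i. Var (Zv i) :: 'k mpoly" and ?V = "\<lambda>i. Var (Vv i) :: 'k mpoly"
  have R: "is_subring ?R"
    by (rule poly_ring_is_subring)
  have ZV: "?Z (fst (edge h)) * ?V (snd (edge h)) \<in> ?R" if "h \<in> {1..m}" for h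
    using that by (intro subring_mult[OF R] Var_in_full_ring edge_ends)
  have "Var (Ev h) - ?Z (fst (edge h)) * ?V (snd (edge h)) \<in> I_DE n m edge" if "h \<in> {1..m}" for h
    unfolding I_DE_def by (rule ideal_in_generator[OF R]) (use that in blast)
  then have "edge_monomial m \<gamma> - (\<Prod>h\<in>{1..m}. (?Z (fst (edge h)) * ?V (snd (edge h))) ^ \<gamma> h)
      \<in> I_DE n m edge"
    unfolding edge_monomial_def I_DE_def
    by (intro ideal_in_diff_prod[OF R] conjI subring_power[OF R] ideal_in_diff_power[OF R]
        Var_in_full_ring ZV) auto
  moreover have "(\<Prod>h\<in>{1..m}. (?Z (fst (edge h)) * ?V (snd (edge h))) ^ \<gamma> h)
      = vertex_monomial n (outdeg edge m \<gamma>) (indeg edge m \<gamma>)"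
  proof -
    have "(\<Prod>h\<in>{1..m}. ?Z (fst (edge h)) ^ \<gamma> h) = (\<Prod>i\<in>{1..n}. ?Z i ^ outdeg edge m \<gamma> i)"
      unfolding outdeg_def by (rule prod_power_group) (use edge_ends in auto)
    moreover have "(\<Prod>h\<in>{1..m}. ?V (snd (edge h)) ^ \<gamma> h) = (\<Prod>i\<in>{1..n}. ?V i ^ indeg edge m \<gamma> i)"
      unfolding indeg_def by (rule prod_power_group) (use edge_ends in auto)
    ultimately show ?thesis
      unfolding vertex_monomial_def by (simp add: power_mult_distrib prod.distrib)
  qed
  ultimately show ?thesis
    by simp
qed

lemma vertex_monomial_shift_mod_I_DE:
  "(vertex_monomial n (\<lambda>i. a i + c i) (\<lambda>i. b i + c i) :: 'k::comm_ring_1 mpoly)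
     - vertex_monomial n a b \<in> I_DE n m edge"
proof -
  let ?R = "poly_ring (full_vars n m) :: 'k mpoly set"
  let ?ZV = "\<lambda>i. Var (Zv i) * Var (Vv i) :: 'k mpoly"
  have R: "is_subring ?R"
    by (rule poly_ring_is_subring)
  have "?ZV i - 1 \<in> I_DE n m edge" if "i \<in> {1..n}" for i
    unfolding I_DE_def by (rule ideal_in_generator[OF R]) (use that in blast)
  then have "(\<Prod>i\<in>{1..n}. ?ZV i ^ c i) - (\<Prod>i\<in>{1..n}. 1 ^ c i) \<in> I_DE n m edge"
    unfolding I_DE_def
    by (intro ideal_in_diff_prod[OF R] conjI subring_power[OF R] ideal_in_diff_power[OF R]
        subring_mult[OF R] subring_one[OF R] Var_in_full_ring) auto
  then have "vertex_monomial n a b * ((\<Prod>i\<in>{1..n}. ?ZV i ^ c i) - 1) \<in> I_DE n m edge"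
    using ideal_in_mult[OF R vertex_monomial_in_full_ring] unfolding I_DE_def by simp
  moreover have "vertex_monomial n (\<lambda>i. a i + c i) (\<lambda>i. b i + c i)
      = vertex_monomial n a b * (\<Prod>i\<in>{1..n}. ?ZV i ^ c i)"
    unfolding vertex_monomial_def by (simp add: power_add power_mult_distrib prod.distrib ac_simps)
  ultimately show ?thesis
    by (simp add: right_diff_distrib)
qed

lemma balanced_binomial_in_I_DE:
  assumes "balanced edge m \<alpha> \<beta>"
  shows "(edge_monomial m \<alpha> :: 'k::comm_ring_1 mpoly) - edge_monomial m \<beta> \<in> I_DE n m edge"
proof -
  let ?in = "indeg edge m" and ?out = "outdeg edge m"
  let ?X = "\<lambda>\<gamma>. vertex_monomial n (?out \<gamma>) (?in \<gamma>) :: 'k mpoly"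
  let ?S = "vertex_monomial n (\<lambda>v. ?out \<alpha> v + ?out \<beta> v) (\<lambda>v. ?in \<alpha> v + ?out \<beta> v) :: 'k mpoly"
  have "?S = vertex_monomial n (\<lambda>v. ?out \<beta> v + ?out \<alpha> v) (\<lambda>v. ?in \<beta> v + ?out \<alpha> v)"
    using assms unfolding balanced_def by (simp add: add.commute)
  then have S_\<beta>: "?S - ?X \<beta> \<in> I_DE n m edge"
    using vertex_monomial_shift_mod_I_DE[of "?out \<beta>" "?out \<alpha>" "?in \<beta>"] by simp
  have S_\<alpha>: "?S - ?X \<alpha> \<in> I_DE n m edge"
    using vertex_monomial_shift_mod_I_DE[of "?out \<alpha>" "?out \<beta>" "?in \<alpha>"] by simp
  have "edge_monomial m \<alpha> - ?S \<in> I_DE n m edge"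
    by (rule I_DE_diff_trans[OF edge_monomial_mod_I_DE I_DE_diff_sym[OF S_\<alpha>]])
  then have "edge_monomial m \<alpha> - ?X \<beta> \<in> I_DE n m edge"
    by (rule I_DE_diff_trans[OF _ S_\<beta>])
  then show ?thesis
    by (rule I_DE_diff_trans[OF _ I_DE_diff_sym[OF edge_monomial_mod_I_DE]])
qed

end

definition cycle_binomials :: "nat \<Rightarrow> nat \<Rightarrow> (nat \<Rightarrow> nat \<times> nat) \<Rightarrow> 'k::comm_ring_1 mpoly set" where
  "cycle_binomials n m edge = {f_C edge vs hs | vs hs. is_cycle n m edge vs hs}"

definition fwd_steps :: "(nat \<Rightarrow> nat \<times> nat) \<Rightarrow> nat list \<Rightarrow> nat list \<Rightarrow> nat set" where
  "fwd_steps edge vs hs = {k. k < length vs \<and> fwd edge vs hs k}"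

definition bwd_steps :: "(nat \<Rightarrow> nat \<times> nat) \<Rightarrow> nat list \<Rightarrow> nat list \<Rightarrow> nat set" where
  "bwd_steps edge vs hs = {k. k < length vs \<and> \<not> fwd edge vs hs k}"

lemma edge_monomial_indicator:
  assumes "B \<subseteq> {1..m}"
  shows "(edge_monomial m (indicator B) :: 'k::comm_ring_1 mpoly) = (\<Prod>h\<in>B. Var (Ev h))"
proof -
  have "(edge_monomial m (indicator B) :: 'k mpoly) = (\<Prod>h\<in>{1..m}. if h \<in> B then Var (Ev h) else 1)"
    unfolding edge_monomial_def by (rule prod.cong) (simp_all add: indicator_def)
  also have "\<dots> = (\<Prod>h\<in>B. Var (Ev h))"
    using assms by (simp add: prod.inter_restrict[symmetric] Int_absorb1)
  finally show ?thesis .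
qed

lemma sum_indicator_image_nth:
  assumes "distinct hs" "set hs \<subseteq> A" "finite A" "K \<subseteq> {..<length hs}"
  shows "(\<Sum>h\<in>{h\<in>A. P h}. indicator ((!) hs ` K) h :: nat) = (\<Sum>k\<in>K. if P (hs!k) then 1 else 0)"
proof -
  have sub: "(!) hs ` K \<subseteq> A"
    using assms(2,4) nth_mem by fastforce
  have fin: "finite K"
    using assms(4) finite_subset by blast
  have "(\<Sum>h\<in>{h\<in>A. P h}. indicator ((!) hs ` K) h :: nat) = card ({h\<in>A. P h} \<inter> (!) hs ` K)"
    using assms(3) by (simp add: sum_indicator_eq_card)
  also have "{h\<in>A. P h} \<inter> (!) hs ` K = (!) hs ` {k\<in>K. P (hs!k)}"
    using sub by blast
  also have "card \<dots> = card {k\<in>K. P (hs!k)}"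
    using assms(1,4) by (intro card_image inj_on_nth) auto
  also have "\<dots> = (\<Sum>k\<in>K. if P (hs!k) then 1 else 0)"
    using fin by (simp add: sum.inter_filter[symmetric])
  finally show ?thesis .
qed

lemma sum_lessThan_rotate: "(\<Sum>k<q. f (Suc k mod q)) = (\<Sum>k<q. f k)"
proof (cases q)
  case (Suc p)
  have "(\<Sum>k<p. f (Suc k mod Suc p)) = (\<Sum>k<p. f (Suc k))"
    by (rule sum.cong) simp_all
  then have "(\<Sum>k<Suc p. f (Suc k mod Suc p)) = f 0 + (\<Sum>k<p. f (Suc k))"
    by (simp add: add.commute)
  also have "\<dots> = (\<Sum>k<Suc p. f k)"
    by (simp only: sum.lessThan_Suc_shift)
  finally show ?thesis
    using Suc by simp
qed simp

context
  fixes n m :: nat and edge :: "nat \<Rightarrow> nat \<times> nat" and vs hs :: "nat list"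
  assumes cycle: "is_cycle n m edge vs hs"
begin

lemma f_C_eq_edge_monomial_diff:
  "(f_C edge vs hs :: 'k::comm_ring_1 mpoly)
     = edge_monomial m (indicator ((!) hs ` fwd_steps edge vs hs))
       - edge_monomial m (indicator ((!) hs ` bwd_steps edge vs hs))"
proof -
  have hs: "distinct hs" "set hs \<subseteq> {1..m}" "length hs = length vs"
    using cycle unfolding is_cycle_def by auto
  have "(edge_monomial m (indicator ((!) hs ` K)) :: 'k mpoly) = (\<Prod>k\<in>K. Var (Ev (hs!k)))"
    if K: "K \<subseteq> {..<length vs}" for K
  proof -
    have inj: "inj_on ((!) hs) K"
      using K hs by (intro inj_on_nth) auto
    have "(!) hs ` K \<subseteq> set hs"
      using K hs(3) by (auto intro!: nth_mem)
    then have "(edge_monomial m (indicator ((!) hs ` K)) :: 'k mpoly) = (\<Prod>h\<in>(!) hs ` K. Var (Ev h))"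
      using hs(2) by (intro edge_monomial_indicator) blast
    also have "\<dots> = (\<Prod>k\<in>K. Var (Ev (hs!k)))"
      by (simp add: prod.reindex[OF inj])
    finally show ?thesis .
  qed
  moreover have "fwd_steps edge vs hs \<subseteq> {..<length vs}" "bwd_steps edge vs hs \<subseteq> {..<length vs}"
    by (auto simp: fwd_steps_def bwd_steps_def)
  ultimately show ?thesis
    unfolding f_C_def fwd_steps_def[symmetric] bwd_steps_def[symmetric] by simp
qed

text \<open>Going around the cycle, every vertex is entered once and left once, whatever the
  orientation of the edges.\<close>

lemma cycle_balanced:
  "balanced edge m (indicator ((!) hs ` fwd_steps edge vs hs)) (indicator ((!) hs ` bwd_steps edge vs hs))"
  unfolding balanced_def
proof
  fix v
  let ?q = "length vs" and ?P = "fwd_steps edge vs hs" and ?M = "bwd_steps edge vs hs"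
  let ?enter = "\<lambda>k. if vs!(Suc k mod ?q) = v then 1 else 0 :: nat"
  let ?leave = "\<lambda>k. if vs!k = v then 1 else 0 :: nat"
  have hs: "distinct hs" "set hs \<subseteq> {1..m}" "length hs = ?q"
    using cycle unfolding is_cycle_def by auto
  have steps: "?P \<subseteq> {..<length hs}" "?M \<subseteq> {..<length hs}"
    using hs by (auto simp: fwd_steps_def bwd_steps_def)
  have fwd_edge: "edge (hs!k) = (vs!k, vs!(Suc k mod ?q))" if "k \<in> ?P" for k
    using that by (simp add: fwd_steps_def fwd_def)
  have bwd_edge: "edge (hs!k) = (vs!(Suc k mod ?q), vs!k)" if "k \<in> ?M" for k
    using that cycle unfolding bwd_steps_def fwd_def is_cycle_def by auto
  have split: "(\<Sum>k\<in>?P. g k) + (\<Sum>k\<in>?M. g k) = (\<Sum>k<?q. g k)" for g :: "nat \<Rightarrow> nat"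
    by (subst sum.union_disjoint[symmetric])
      (auto simp: fwd_steps_def bwd_steps_def intro: sum.cong)
  note count = sum_indicator_image_nth[OF hs(1,2) finite_atLeastAtMost]
  have deg: "indeg edge m (indicator ((!) hs ` ?P)) v = (\<Sum>k\<in>?P. ?enter k)"
    "outdeg edge m (indicator ((!) hs ` ?M)) v = (\<Sum>k\<in>?M. ?enter k)"
    "indeg edge m (indicator ((!) hs ` ?M)) v = (\<Sum>k\<in>?M. ?leave k)"
    "outdeg edge m (indicator ((!) hs ` ?P)) v = (\<Sum>k\<in>?P. ?leave k)"
    unfolding indeg_def outdeg_def count[OF steps(1)] count[OF steps(2)]
    by (simp_all add: fwd_edge bwd_edge cong: sum.cong)
  have "(\<Sum>k<?q. ?enter k) = (\<Sum>k<?q. ?leave k)"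
    by (rule sum_lessThan_rotate)
  then show "indeg edge m (indicator ((!) hs ` ?P)) v + outdeg edge m (indicator ((!) hs ` ?M)) v
      = indeg edge m (indicator ((!) hs ` ?M)) v + outdeg edge m (indicator ((!) hs ` ?P)) v"
    using split[of ?enter] split[of ?leave] unfolding deg by linarith
qed

end

section \<open>Balanced binomials lie in the cycle ideal\<close>

definition support_arc ::
  "(nat \<Rightarrow> nat \<times> nat) \<Rightarrow> nat \<Rightarrow> (nat \<Rightarrow> nat) \<Rightarrow> (nat \<Rightarrow> nat) \<Rightarrow> nat \<Rightarrow> nat \<Rightarrow> nat \<Rightarrow> bool" where
  "support_arc edge m \<alpha> \<beta> x y h \<longleftrightarrow>
     h \<in> {1..m} \<and> (0 < \<alpha> h \<and> edge h = (x, y) \<or> 0 < \<beta> h \<and> edge h = (y, x))"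

lemma support_arc_continues:
  assumes bal: "balanced edge m \<alpha> \<beta>" and arc: "support_arc edge m \<alpha> \<beta> x y h"
  shows "\<exists>z h'. support_arc edge m \<alpha> \<beta> y z h'"
proof -
  have h: "h \<in> {1..m}"
    using arc by (simp add: support_arc_def)
  have "indeg edge m \<alpha> y + outdeg edge m \<beta> y \<noteq> 0"
    using arc h unfolding support_arc_def indeg_def outdeg_def
    by (auto simp: sum_eq_0_iff)
  then have "indeg edge m \<beta> y \<noteq> 0 \<or> outdeg edge m \<alpha> y \<noteq> 0"
    using bal unfolding balanced_def by (metis add_is_0)
  then obtain h' where "h' \<in> {1..m}" "0 < \<beta> h' \<and> snd (edge h') = y \<or> 0 < \<alpha> h' \<and> fst (edge h') = y"
    unfolding indeg_def outdeg_def by (auto simp: sum_eq_0_iff)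
  then show ?thesis
    unfolding support_arc_def by (metis prod.collapse)
qed

lemma edge_monomial_add_diff:
  "(edge_monomial m (\<lambda>h. \<alpha> h + \<gamma> h) :: 'k::comm_ring_1 mpoly) - edge_monomial m (\<lambda>h. \<beta> h + \<delta> h)
     = edge_monomial m \<alpha> * (edge_monomial m \<gamma> - edge_monomial m \<delta>)
       + edge_monomial m \<delta> * (edge_monomial m \<alpha> - edge_monomial m \<beta>)"
  by (simp add: edge_monomial_add algebra_simps)

context
  fixes n m :: nat and edge :: "nat \<Rightarrow> nat \<times> nat"
  assumes simple: "simple_digraph n m edge"
begin

lemma support_arc_cycle_is_cycle:
  assumes cyc: "2 \<le> length vs" "length hs = length vs" "distinct vs" "distinct hs" "set vs \<subseteq> {1..n}"
    and arcs: "\<And>k. k < length vs \<Longrightarrow> support_arc edge m \<alpha> \<beta> (vs!k) (vs!(Suc k mod length vs)) (hs!k)"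
  shows "is_cycle n m edge vs hs"
    and "\<forall>k\<in>fwd_steps edge vs hs. 0 < \<alpha> (hs!k)" and "\<forall>k\<in>bwd_steps edge vs hs. 0 < \<beta> (hs!k)"
proof -
  have "set hs \<subseteq> {1..m}"
  proof
    fix h
    assume "h \<in> set hs"
    then obtain k where "k < length vs" "h = hs!k"
      using cyc(2) by (metis in_set_conv_nth)
    then show "h \<in> {1..m}"
      using arcs[of k] by (simp add: support_arc_def)
  qed
  moreover have "edge (hs!k) = (vs!k, vs!(Suc k mod length vs))
      \<or> edge (hs!k) = (vs!(Suc k mod length vs), vs!k)" if "k < length vs" for k
    using arcs[OF that] unfolding support_arc_def by blast
  ultimately show "is_cycle n m edge vs hs"
    using cyc unfolding is_cycle_def by blast
  show "\<forall>k\<in>fwd_steps edge vs hs. 0 < \<alpha> (hs!k)"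
  proof
    fix k
    assume "k \<in> fwd_steps edge vs hs"
    then have k: "k < length vs" "edge (hs!k) = (vs!k, vs!(Suc k mod length vs))"
      by (simp_all add: fwd_steps_def fwd_def)
    moreover have "hs!k \<in> {1..m}"
      using arcs[OF k(1)] by (simp add: support_arc_def)
    then have "vs!k \<noteq> vs!(Suc k mod length vs)"
      using edge_ends(3)[OF simple] k(2) by fastforce
    ultimately show "0 < \<alpha> (hs!k)"
      using arcs[OF k(1)] unfolding support_arc_def by auto
  qed
  show "\<forall>k\<in>bwd_steps edge vs hs. 0 < \<beta> (hs!k)"
  proof
    fix k
    assume "k \<in> bwd_steps edge vs hs"
    then have k: "k < length vs" "edge (hs!k) \<noteq> (vs!k, vs!(Suc k mod length vs))"
      by (simp_all add: bwd_steps_def fwd_def)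
    then show "0 < \<beta> (hs!k)"
      using arcs[OF k(1)] unfolding support_arc_def by auto
  qed
qed

lemma balanced_disjoint_has_cycle:
  assumes bal: "balanced edge m \<alpha> \<beta>"
    and disjoint: "\<forall>h\<in>{1..m}. \<alpha> h = 0 \<or> \<beta> h = 0"
    and differ: "\<exists>h\<in>{1..m}. \<alpha> h \<noteq> \<beta> h"
  obtains vs hs where "is_cycle n m edge vs hs"
    "\<forall>k\<in>fwd_steps edge vs hs. 0 < \<alpha> (hs!k)" "\<forall>k\<in>bwd_steps edge vs hs. 0 < \<beta> (hs!k)"
proof -
  let ?arc = "support_arc edge m \<alpha> \<beta>"
  have ends: "x \<in> {1..n} \<and> y \<in> {1..n} \<and> x \<noteq> y" if "?arc x y h" for x y h
    using that edge_ends[OF simple, of h] unfolding support_arc_def by auto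
  have tail_unique: "x = x'" if arcs: "?arc x y h" "?arc x' y' h" for x x' y y' h
  proof -
    have "\<not> (0 < \<alpha> h \<and> 0 < \<beta> h)"
      using arcs(1) disjoint unfolding support_arc_def by auto
    then show ?thesis
      using arcs unfolding support_arc_def by auto
  qed
  obtain h where "h \<in> {1..m}" "\<alpha> h \<noteq> \<beta> h"
    using differ by blast
  then have "?arc (fst (edge h)) (snd (edge h)) h \<or> ?arc (snd (edge h)) (fst (edge h)) h"
    unfolding support_arc_def by auto
  then obtain x\<^sub>0 y\<^sub>0 where start: "?arc x\<^sub>0 y\<^sub>0 h"
    by blast
  obtain vs hs where cyc: "2 \<le> length vs" "length hs = length vs" "distinct vs" "distinct hs"
    "set vs \<subseteq> {1..n}" and arcs: "\<And>k. k < length vs \<Longrightarrow> ?arc (vs!k) (vs!(Suc k mod length vs)) (hs!k)"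
  proof (rule arc_relation_has_cycle[where V = "{1..n}" and arc = ?arc])
    show "?arc x\<^sub>0 y\<^sub>0 h"
      by (rule start)
    show "\<exists>z h'. ?arc y z h'" if "?arc x y h" for x y h
      using support_arc_continues[OF bal that] .
  qed (use ends tail_unique in auto)
  then show ?thesis
    using support_arc_cycle_is_cycle[OF cyc arcs] that by blast
qed

lemma balanced_cycle_part:
  assumes bal: "balanced edge m \<alpha> \<beta>" and differ: "\<exists>h\<in>{1..m}. \<alpha> h \<noteq> \<beta> h"
  obtains \<gamma> \<delta> where "\<And>h. \<gamma> h \<le> \<alpha> h" "\<And>h. \<delta> h \<le> \<beta> h" "\<exists>h\<in>{1..m}. 0 < \<gamma> h + \<delta> h"
    "balanced edge m \<gamma> \<delta>"
    "(edge_monomial m \<gamma> :: 'k::comm_ring_1 mpoly) - edge_monomial m \<delta>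
       \<in> ideal_in (poly_ring (Ev ` {1..m})) (cycle_binomials n m edge)"
proof (cases "\<exists>h\<in>{1..m}. 0 < \<alpha> h \<and> 0 < \<beta> h")
  case True
  then obtain h where "h \<in> {1..m}" "0 < \<alpha> h" "0 < \<beta> h"
    by blast
  then show ?thesis
    by (intro that[of "indicator {h}" "indicator {h}"])
      (auto simp: indicator_def balanced_refl ideal_in_zero Suc_leI)
next
  case False
  then obtain vs hs where cyc: "is_cycle n m edge vs hs"
    and pos: "\<forall>k\<in>fwd_steps edge vs hs. 0 < \<alpha> (hs!k)" "\<forall>k\<in>bwd_steps edge vs hs. 0 < \<beta> (hs!k)"
    using balanced_disjoint_has_cycle[OF bal _ differ] by (metis not_gr_zero)
  let ?\<gamma> = "indicator ((!) hs ` fwd_steps edge vs hs) :: nat \<Rightarrow> nat"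
  let ?\<delta> = "indicator ((!) hs ` bwd_steps edge vs hs) :: nat \<Rightarrow> nat"
  have len: "2 \<le> length vs" "length hs = length vs" "set hs \<subseteq> {1..m}"
    using cyc unfolding is_cycle_def by auto
  then have "hs!0 \<in> set hs"
    by (intro nth_mem) linarith
  then have "hs!0 \<in> {1..m}"
    using len(3) by blast
  moreover have "0 \<in> fwd_steps edge vs hs \<or> 0 \<in> bwd_steps edge vs hs"
    using len by (auto simp: fwd_steps_def bwd_steps_def)
  ultimately have "\<exists>h\<in>{1..m}. 0 < ?\<gamma> h + ?\<delta> h"
    by (auto simp: indicator_def)
  moreover have "?\<gamma> h \<le> \<alpha> h" "?\<delta> h \<le> \<beta> h" for h
    using pos by (auto simp: indicator_def Suc_leI)
  moreover have "(edge_monomial m ?\<gamma> :: 'k mpoly) - edge_monomial m ?\<delta>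
      \<in> ideal_in (poly_ring (Ev ` {1..m})) (cycle_binomials n m edge)"
    using cyc unfolding f_C_eq_edge_monomial_diff[OF cyc, symmetric] cycle_binomials_def
    by (intro ideal_in_generator poly_ring_is_subring) blast
  ultimately show ?thesis
    using that cycle_balanced[OF cyc] by blast
qed

lemma balanced_binomial_in_cycle_ideal:
  assumes "balanced edge m \<alpha> \<beta>"
  shows "(edge_monomial m \<alpha> :: 'k::comm_ring_1 mpoly) - edge_monomial m \<beta>
     \<in> ideal_in (poly_ring (Ev ` {1..m})) (cycle_binomials n m edge)"
  using assms
proof (induction "\<Sum>h\<in>{1..m}. \<alpha> h + \<beta> h" arbitrary: \<alpha> \<beta> rule: less_induct)
  case less
  let ?R = "poly_ring (Ev ` {1..m}) :: 'k mpoly set"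
  have R: "is_subring ?R"
    by (rule poly_ring_is_subring)
  show ?case
  proof (cases "\<exists>h\<in>{1..m}. \<alpha> h \<noteq> \<beta> h")
    case False
    then have "(edge_monomial m \<alpha> :: 'k mpoly) = edge_monomial m \<beta>"
      by (intro edge_monomial_cong) auto
    then show ?thesis
      by (simp add: ideal_in_zero)
  next
    case True
    then obtain \<gamma> \<delta> where le: "\<And>h. \<gamma> h \<le> \<alpha> h" "\<And>h. \<delta> h \<le> \<beta> h"
      and pos: "\<exists>h\<in>{1..m}. 0 < \<gamma> h + \<delta> h" and bal: "balanced edge m \<gamma> \<delta>"
      and step: "(edge_monomial m \<gamma> :: 'k mpoly) - edge_monomial m \<delta>
          \<in> ideal_in ?R (cycle_binomials n m edge)"
      using balanced_cycle_part[OF less.prems] by blast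
    define \<alpha>' where "\<alpha>' h = \<alpha> h - \<gamma> h" for h
    define \<beta>' where "\<beta>' h = \<beta> h - \<delta> h" for h
    have \<alpha>: "\<alpha> = (\<lambda>h. \<alpha>' h + \<gamma> h)" and \<beta>: "\<beta> = (\<lambda>h. \<beta>' h + \<delta> h)"
      using le by (auto simp: \<alpha>'_def \<beta>'_def)
    have "balanced edge m \<alpha>' \<beta>'"
      using balanced_cancel less.prems bal unfolding \<alpha> \<beta> by blast
    moreover have "(\<Sum>h\<in>{1..m}. \<alpha>' h + \<beta>' h) < (\<Sum>h\<in>{1..m}. \<alpha> h + \<beta> h)"
      using pos unfolding \<alpha> \<beta> by (intro sum_strict_mono_ex1) auto
    ultimately have "edge_monomial m \<alpha>' - edge_monomial m \<beta>' \<in> ideal_in ?R (cycle_binomials n m edge)"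
      using less.hyps by blast
    then show ?thesis
      unfolding \<alpha> \<beta> edge_monomial_add_diff
      by (intro ideal_in_add[OF R] ideal_in_mult[OF R] edge_monomial_in_poly_ring step)
  qed
qed

end

section \<open>The \<open>\<int>\<^sup>n\<close>-grading\<close>

definition var_weight :: "(nat \<Rightarrow> nat \<times> nat) \<Rightarrow> var \<Rightarrow> (nat \<Rightarrow>\<^sub>0 int)" where
  "var_weight edge x = (case x of
      Ev h \<Rightarrow> frag_of (snd (edge h)) - frag_of (fst (edge h))
    | Vv i \<Rightarrow> frag_of i
    | Zv i \<Rightarrow> - frag_of i)"

definition weight :: "(nat \<Rightarrow> nat \<times> nat) \<Rightarrow> (var \<Rightarrow>\<^sub>0 nat) \<Rightarrow> (nat \<Rightarrow>\<^sub>0 int)" where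
  "weight edge mon = (\<Sum>x\<in>Poly_Mapping.keys mon. frag_cmul (int (Poly_Mapping.lookup mon x)) (var_weight edge x))"

definition edge_exponents :: "(var \<Rightarrow>\<^sub>0 nat) \<Rightarrow> nat \<Rightarrow> nat" where
  "edge_exponents mon h = Poly_Mapping.lookup mon (Ev h)"

lemma weight_add: "weight edge (a + b) = weight edge a + weight edge b"
  unfolding weight_def by (rule setsum_keys_plus_distrib) (simp_all add: frag_cmul_distrib)

lemma push_keys_weight_mult:
  "push_keys (weight edge) (p * q) = push_keys (weight edge) p * push_keys (weight edge) (q :: 'k::comm_ring_1 mpoly)"
  by (rule push_keys_mult) (rule weight_add)

lemma push_keys_weight_Var:
  "push_keys (weight edge) (Var x :: 'k::comm_ring_1 mpoly) = Poly_Mapping.single (var_weight edge x) 1"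
  by (simp add: Var_def weight_def)

lemma push_keys_weight_I_DE:
  assumes "f \<in> I_DE n m edge"
  shows "push_keys (weight edge) (f :: 'k::comm_ring_1 mpoly) = 0"
proof -
  let ?S = "{Var (Ev h) - Var (Zv (fst (edge h))) * Var (Vv (snd (edge h))) | h. h \<in> {1..m}}
      \<union> {Var (Zv i) * Var (Vv i) - 1 | i. i \<in> {1..n}} :: 'k mpoly set"
  obtain F c where F: "F \<subseteq> ?S" "f = (\<Sum>g\<in>F. c g * g)"
    using assms unfolding I_DE_def ideal_in_def by blast
  have "push_keys (weight edge) g = 0" if "g \<in> ?S" for g
    using that by (auto simp: push_keys_diff push_keys_weight_mult push_keys_weight_Var
        push_keys_one weight_def mult_single var_weight_def)
  then show ?thesis
    using F by (simp add: push_keys_sum push_keys_weight_mult subset_eq)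
qed

lemma monomial_eq_edge_monomial:
  assumes "Poly_Mapping.keys mon \<subseteq> Ev ` {1..m}"
  shows "Poly_Mapping.single mon (1::'k::comm_ring_1) = edge_monomial m (edge_exponents mon)"
proof -
  have "Poly_Mapping.single mon (1::'k) = (\<Prod>x\<in>Poly_Mapping.keys mon. Var x ^ Poly_Mapping.lookup mon x)"
    by (rule monomial_eq_prod_Var_power)
  also have "\<dots> = (\<Prod>x\<in>Ev ` {1..m}. Var x ^ Poly_Mapping.lookup mon x)"
    by (rule prod.mono_neutral_left) (use assms in \<open>auto simp: in_keys_iff\<close>)
  also have "\<dots> = edge_monomial m (edge_exponents mon)"
    by (simp add: prod.reindex inj_on_def edge_monomial_def edge_exponents_def)
  finally show ?thesis .
qed

lemma lookup_weight:
  assumes "Poly_Mapping.keys mon \<subseteq> Ev ` {1..m}"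
  shows "Poly_Mapping.lookup (weight edge mon) v
     = int (indeg edge m (edge_exponents mon) v) - int (outdeg edge m (edge_exponents mon) v)"
proof -
  let ?e = "edge_exponents mon"
  have "weight edge mon = (\<Sum>x\<in>Ev ` {1..m}. frag_cmul (int (Poly_Mapping.lookup mon x)) (var_weight edge x))"
    unfolding weight_def by (rule sum.mono_neutral_left) (use assms in \<open>auto simp: in_keys_iff\<close>)
  also have "\<dots> = (\<Sum>h\<in>{1..m}. frag_cmul (int (?e h)) (var_weight edge (Ev h)))"
    by (simp add: sum.reindex inj_on_def edge_exponents_def)
  finally have "Poly_Mapping.lookup (weight edge mon) v
      = (\<Sum>h\<in>{1..m}. int (if snd (edge h) = v then ?e h else 0) - int (if fst (edge h) = v then ?e h else 0))"
    by (auto simp: lookup_sum var_weight_def lookup_minus lookup_single when_def intro!: sum.cong)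
  then show ?thesis
    unfolding indeg_def outdeg_def of_nat_sum sum.inter_filter[OF finite_atLeastAtMost]
    by (simp add: sum_subtractf)
qed

lemma weight_eq_imp_balanced:
  assumes "Poly_Mapping.keys a \<subseteq> Ev ` {1..m}" "Poly_Mapping.keys b \<subseteq> Ev ` {1..m}"
    and "weight edge a = weight edge b"
  shows "balanced edge m (edge_exponents a) (edge_exponents b)"
  unfolding balanced_def
proof
  fix v
  have "Poly_Mapping.lookup (weight edge a) v = Poly_Mapping.lookup (weight edge b) v"
    using assms(3) by simp
  then show "indeg edge m (edge_exponents a) v + outdeg edge m (edge_exponents b) v
      = indeg edge m (edge_exponents b) v + outdeg edge m (edge_exponents a) v"
    unfolding lookup_weight[OF assms(1)] lookup_weight[OF assms(2)] by linarith
qed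

context
  fixes n m :: nat and edge :: "nat \<Rightarrow> nat \<times> nat"
  assumes simple: "simple_digraph n m edge"
begin

lemma cycle_ideal_subset_I_E_D:
  "ideal_in (poly_ring (Ev ` {1..m})) (cycle_binomials n m edge) \<subseteq> (I_E_D n m edge :: 'k::comm_ring_1 mpoly set)"
proof -
  have "g \<in> I_DE n m edge \<and> g \<in> poly_ring (Ev ` {1..m})" if g: "g \<in> cycle_binomials n m edge"
    for g :: "'k mpoly"
  proof -
    obtain vs hs where cyc: "is_cycle n m edge vs hs" and g: "g = f_C edge vs hs"
      using g unfolding cycle_binomials_def by blast
    show ?thesis
      unfolding g f_C_eq_edge_monomial_diff[OF cyc]
      by (intro conjI balanced_binomial_in_I_DE[OF simple] cycle_balanced[OF cyc]
          subring_diff[OF poly_ring_is_subring] edge_monomial_in_poly_ring)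
  qed
  then have gens: "(cycle_binomials n m edge :: 'k mpoly set) \<subseteq> I_DE n m edge \<inter> poly_ring (Ev ` {1..m})"
    by blast
  have "poly_ring (Ev ` {1..m}) \<subseteq> poly_ring (full_vars n m)"
    by (rule poly_ring_mono) (auto simp: full_vars_def)
  then have "ideal_in (poly_ring (Ev ` {1..m})) (cycle_binomials n m edge) \<subseteq> (I_DE n m edge :: 'k mpoly set)"
    using gens unfolding I_DE_def by (intro ideal_in_minimal poly_ring_is_subring) auto
  moreover have "ideal_in (poly_ring (Ev ` {1..m})) (cycle_binomials n m edge)
      \<subseteq> (poly_ring (Ev ` {1..m}) :: 'k mpoly set)"
    using gens by (intro ideal_in_subset poly_ring_is_subring) auto
  ultimately show ?thesis
    unfolding I_E_D_def by blast
qed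

lemma I_E_D_subset_cycle_ideal:
  "(I_E_D n m edge :: 'k::comm_ring_1 mpoly set) \<subseteq> ideal_in (poly_ring (Ev ` {1..m})) (cycle_binomials n m edge)"
proof
  let ?J = "ideal_in (poly_ring (Ev ` {1..m})) (cycle_binomials n m edge) :: 'k mpoly set"
  have R: "is_subring (poly_ring (Ev ` {1..m}) :: 'k mpoly set)"
    by (rule poly_ring_is_subring)
  fix f :: "'k mpoly"
  assume "f \<in> I_E_D n m edge"
  then have f: "push_keys (weight edge) f = 0" "f \<in> poly_ring (Ev ` {1..m})"
    unfolding I_E_D_def by (auto intro: push_keys_weight_I_DE)
  then have keys: "Poly_Mapping.keys a \<subseteq> Ev ` {1..m}" if "a \<in> Poly_Mapping.keys f" for a
    using that unfolding poly_ring_def by blast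
  obtain r where r: "\<And>a. a \<in> Poly_Mapping.keys f \<Longrightarrow> r a \<in> Poly_Mapping.keys f \<and> weight edge (r a) = weight edge a"
    and f_eq: "f = (\<Sum>a\<in>Poly_Mapping.keys f.
        Poly_Mapping.single a (Poly_Mapping.lookup f a) - Poly_Mapping.single (r a) (Poly_Mapping.lookup f a))"
    using push_keys_eq_0_binomial_decomposition[OF f(1)] by blast
  have "Poly_Mapping.single a c - Poly_Mapping.single (r a) c \<in> ?J" if a: "a \<in> Poly_Mapping.keys f" for a c
  proof -
    have ka: "Poly_Mapping.keys a \<subseteq> Ev ` {1..m}" and kr: "Poly_Mapping.keys (r a) \<subseteq> Ev ` {1..m}"
      using r[OF a] keys a by auto
    have "Poly_Mapping.single a c - Poly_Mapping.single (r a) c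
        = Poly_Mapping.single 0 c * (Poly_Mapping.single a 1 - Poly_Mapping.single (r a) 1)"
      by (simp add: right_diff_distrib mult_single)
    also have "\<dots> = Poly_Mapping.single 0 c * (edge_monomial m (edge_exponents a) - edge_monomial m (edge_exponents (r a)))"
      by (simp only: monomial_eq_edge_monomial[OF ka] monomial_eq_edge_monomial[OF kr])
    also have "\<dots> \<in> ?J"
      using r[OF a]
      by (intro ideal_in_mult[OF R] constant_in_poly_ring balanced_binomial_in_cycle_ideal[OF simple]
          weight_eq_imp_balanced[OF ka kr]) simp
    finally show ?thesis .
  qed
  then show "f \<in> ?J"
    by (subst f_eq) (intro ideal_in_sum[OF R])
qed

end

theorem theorem6:
  fixes n m :: nat and edge :: "nat \<Rightarrow> nat \<times> nat"
  assumes "simple_digraph n m edge"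
  shows "(I_E_D n m edge :: 'k::field_char_0 mpoly set)
           = ideal_in (poly_ring (Ev ` {1..m}))
               {f_C edge vs hs | vs hs. is_cycle n m edge vs hs}"
  using I_E_D_subset_cycle_ideal[OF assms] cycle_ideal_subset_I_E_D[OF assms]
  unfolding cycle_binomials_def by (rule equalityI)

end
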